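(* Consider the attack-free algorithm of the context and let $\widetilde\Lambda^k\in\mathbb R^{J\times D}$ be the matrix whose $i$-th row is $(\lambda_i^k)^\top$. Let $\sigma:=1-\widetilde\kappa\in(0,1)$ and assume the step sizes satisfy, for all $k\ge0$, $$\frac{6(\gamma^k)^2}{u_f^2J^2}\le\frac{(2-\sigma)\sigma^2}{3(3-\sigma)}\qquad\text{and}\qquad1\le\frac{(\gamma^k)^2}{(\gamma^{k+1})^2}\le\frac{2}{1+(1-\sigma^2)}.$$ Then for every $k\ge0$, $$\Big\|\widetilde\Lambda^{k+1}-\tfrac1J\widetilde{\mathbf 1}\widetilde{\mathbf 1}^\top\widetilde\Lambda^{k+1}\Big\|_F^2\le\frac{18(\gamma^{k+1})^2\widetilde\delta^2J}{\sigma^3}.$$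
   Context: Attack-free setting. $J$ agents $\mathcal J=\{1,\dots,J\}$ on an undirected connected graph with neighbor sets $\mathcal N_i$. For each $i$, $f_i:\mathbb R^D\to\mathbb R$ is $u_f$-strongly convex and $L_f$-smooth, $C_i\subset\mathbb R^D$ nonempty compact convex, $s\in\mathbb R^D$. $\widetilde g_i(\lambda)=\frac1J\max_{\theta\in C_i}\{-\lambda^\top\theta-f_i(\theta)\}+\frac1J\lambda^\top s$, with $\nabla\widetilde g_i(\lambda)=\frac1Js-\frac1J\arg\min_{\theta\in C_i}\{\lambda^\top\theta+f_i(\theta)\}$, and $\widetilde\delta^2:=\sup_\lambda\max_{i\in\mathcal J}\|\nabla\widetilde g_i(\lambda)-\frac1J\sum_{j}\nabla\widetilde g_j(\lambda)\|^2<\infty$. $\widetilde E=[\widetilde e_{ij}]\in\mathbb R^{J\times J}$ is doubly stochastic, $\widetilde e_{ij}>0$ iff $(i,j)$ is an edge or $i=j$, and $\widetilde\kappa:=\|\widetilde E-\frac1J\widetilde{\mathbf 1}\widetilde{\mathbf 1}^\top\|^2<1$ (spectral norm, $\widetilde{\mathbf 1}\in\mathbb R^J$ all-ones). Algorithm: common initialization $\lambda_i^0=\lambda^0$; $\theta_i^k=\arg\min_{\theta\in C_i}\{\theta^\top\lambda_i^k+f_i(\theta)\}$, $\lambda_i^{k+1/2}=\lambda_i^k-\gamma^k(\frac1Js-\frac1J\theta_i^k)$, $\lambda_i^{k+1}=\sum_{j\in\mathcal N_i\cup\{i\}}\widetilde e_{ij}\lambda_j^{k+1/2}$. $\|\cdot\|_F$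 is the Frobenius norm. *)

theory Defs
  imports "HOL-Analysis.Analysis"
begin

definition strongly_convex :: "real \<Rightarrow> ('a::real_inner \<Rightarrow> real) \<Rightarrow> bool" where
  "strongly_convex u f \<longleftrightarrow> 0 < u \<and> convex_on UNIV (\<lambda>x. f x - (u / 2) * (norm x)^2)"

definition L_smooth :: "real \<Rightarrow> ('a::real_inner \<Rightarrow> real) \<Rightarrow> bool" where
  "L_smooth L f \<longleftrightarrow> (\<exists>g. (\<forall>x. (f has_derivative (\<lambda>h. g x \<bullet> h)) (at x))
      \<and> (\<forall>x y. norm (g x - g y) \<le> L * norm (x - y)))"

text \<open>argmin over C of theta \<mapsto> lambda^T theta + f theta (unique under the standing assumptions).\<close>
definition argminC :: "('a::real_inner \<Rightarrow> real) \<Rightarrow> 'a set \<Rightarrow> 'a \<Rightarrow> 'a" where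
  "argminC f C lam = (THE th. th \<in> C \<and> (\<forall>ps\<in>C. lam \<bullet> th + f th \<le> lam \<bullet> ps + f ps))"

text \<open>gradient of the local dual function tilde g_i, with J = CARD('j) agents.\<close>
definition grad_g :: "('j::finite \<Rightarrow> 'a::real_inner \<Rightarrow> real) \<Rightarrow> ('j \<Rightarrow> 'a set) \<Rightarrow> 'a \<Rightarrow> 'j \<Rightarrow> 'a \<Rightarrow> 'a" where
  "grad_g f C s i lam = (1 / real CARD('j)) *\<^sub>R s - (1 / real CARD('j)) *\<^sub>R argminC (f i) (C i) lam"

definition delta2 :: "('j::finite \<Rightarrow> 'a::real_inner \<Rightarrow> real) \<Rightarrow> ('j \<Rightarrow> 'a set) \<Rightarrow> 'a \<Rightarrow> real" where
  "delta2 f C s = (SUP lam. Max (range (\<lambda>i. (norm (grad_g f C s i lam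
        - (1 / real CARD('j)) *\<^sub>R (\<Sum>j\<in>UNIV. grad_g f C s j lam)))^2)))"

definition undirected_connected :: "('j::finite \<Rightarrow> 'j set) \<Rightarrow> bool" where
  "undirected_connected N \<longleftrightarrow> (\<forall>i. i \<notin> N i) \<and> (\<forall>i j. j \<in> N i \<longleftrightarrow> i \<in> N j)
     \<and> (\<forall>i j. (i, j) \<in> {(a, b). b \<in> N a}\<^sup>*)"

definition doubly_stochastic :: "real^'j^'j \<Rightarrow> bool" where
  "doubly_stochastic E \<longleftrightarrow> (\<forall>i j. 0 \<le> E$i$j) \<and> (\<forall>i. (\<Sum>j\<in>UNIV. E$i$j) = 1)
     \<and> (\<forall>j. (\<Sum>i\<in>UNIV. E$i$j) = 1)"

definition kappa :: "real^'j^'j \<Rightarrow> real" where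
  "kappa E = (onorm (\<lambda>x. (E - (\<chi> i j. 1 / real CARD('j))) *v x))^2"

text \<open>Squared Frobenius norm of Lambda - (1/J) 1 1^T Lambda, rows lam i.\<close>
definition consensus_err :: "('j::finite \<Rightarrow> 'a::real_normed_vector) \<Rightarrow> real" where
  "consensus_err lam = (\<Sum>i\<in>UNIV. (norm (lam i - (1 / real CARD('j)) *\<^sub>R (\<Sum>j\<in>UNIV. lam j)))^2)"

end

theory Submission
  imports Defs
begin

text \<open>Write \<open>\<sigma> = 1 - \<kappa>\<close> and \<open>e\<^sub>k\<close> for the consensus error. Mixing with \<open>E\<close> multiplies it by at
  most \<open>\<kappa>\<close>. Each \<open>\<nabla>g\<^sub>i\<close> is \<open>1/(u J)\<close>-Lipschitz (the minimiser of a \<open>u\<close>-strongly convex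
  objective moves at most \<open>1/u\<close> times the tilt), so a gradient step inflates it by at most
  \<open>(1 + \<eta>)\<^sup>2\<close> with \<open>\<eta> = \<gamma>\<^sub>k/(u J) \<le> \<sigma>/5\<close>, up to an additive heterogeneity term \<open>\<gamma>\<^sub>k\<^sup>2 J \<delta>\<^sup>2\<close>.
  Young's inequality at weight \<open>\<sigma>/4\<close> gives
  \<open>e\<^sub>k\<^sub>+\<^sub>1 \<le> (1 - \<sigma>)((1 + \<sigma>/4)(1 + \<eta>)\<^sup>2 e\<^sub>k + (1 + 4/\<sigma>) \<gamma>\<^sub>k\<^sup>2 J \<delta>\<^sup>2)\<close>, and the claimed bound
  propagates by induction because the step sizes decay slowly enough.\<close>

lemma strongly_convex_on_segment:
  fixes f :: "'a::real_inner \<Rightarrow> real"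
  assumes "strongly_convex u f" "0 \<le> t" "t \<le> 1"
  shows "f ((1 - t) *\<^sub>R x + t *\<^sub>R y)
    \<le> (1 - t) * f x + t * f y - (u/2) * t * (1 - t) * (norm (x - y))^2"
proof -
  have cv: "convex_on UNIV (\<lambda>x. f x - (u / 2) * (norm x)^2)"
    using assms(1) by (auto simp: strongly_convex_def)
  have h: "f ((1 - t) *\<^sub>R x + t *\<^sub>R y) - (u/2) * (norm ((1 - t) *\<^sub>R x + t *\<^sub>R y))^2
      \<le> (1 - t) * (f x - (u/2) * (norm x)^2) + t * (f y - (u/2) * (norm y)^2)"
    using convex_onD[OF cv, of t x y] assms by auto
  have n: "(norm ((1 - t) *\<^sub>R x + t *\<^sub>R y))^2
      = (1 - t) * (norm x)^2 + t * (norm y)^2 - t * (1 - t) * (norm (x - y))^2"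
    unfolding power2_norm_eq_inner
    by (simp add: inner_add_left inner_add_right inner_diff_left inner_diff_right inner_commute
        algebra_simps power2_eq_square)
  show ?thesis using h unfolding n by (simp add: algebra_simps) argo
qed

lemma strongly_convex_quadratic_growth:
  fixes f :: "'a::real_inner \<Rightarrow> real"
  assumes sc: "strongly_convex u f" and "convex C" and th: "th \<in> C"
    and min: "\<forall>p\<in>C. l \<bullet> th + f th \<le> l \<bullet> p + f p" and y: "y \<in> C"
  shows "(u/2) * (norm (y - th))^2 \<le> (l \<bullet> y + f y) - (l \<bullet> th + f th)"
proof (rule ccontr)
  define a where "a = (l \<bullet> y + f y) - (l \<bullet> th + f th)"
  define c where "c = (u/2) * (norm (y - th))^2"
  assume "\<not> ?thesis"
  hence ac: "a < c" by (simp add: a_def c_def)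
  have segment: "(1 - t) * c \<le> a" if "0 < t" "t < 1" for t
  proof -
    define p where "p = (1 - t) *\<^sub>R th + t *\<^sub>R y"
    have "p \<in> C" using \<open>convex C\<close> th y that unfolding p_def by (simp add: convex_alt)
    then have "l \<bullet> th + f th \<le> l \<bullet> p + f p" using min by blast
    moreover have "f p \<le> (1 - t) * f th + t * f y - (u/2) * t * (1 - t) * (norm (y - th))^2"
      unfolding p_def norm_minus_commute[of y]
      by (rule strongly_convex_on_segment[OF sc]) (use that in auto)
    moreover have "l \<bullet> p = (1 - t) * (l \<bullet> th) + t * (l \<bullet> y)"
      unfolding p_def by (simp add: inner_add_right)
    ultimately have "t * ((1 - t) * c) \<le> t * a"
      unfolding a_def c_def by (simp add: algebra_simps)
    thus ?thesis using that by simp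
  qed
  have "0 \<le> c" using sc unfolding c_def strongly_convex_def by simp
  then have "0 \<le> a" using segment[of "1/2"] by simp
  with ac have "0 < c" by simp
  define t where "t = (c - a) / (2 * c)"
  have "0 < t" "t < 1" using ac \<open>0 < c\<close> \<open>0 \<le> a\<close> by (auto simp: t_def field_simps)
  hence "(1 - t) * c \<le> a" by (rule segment)
  moreover have "(1 - t) * c = (c + a) / 2" using \<open>0 < c\<close> by (simp add: t_def field_simps)
  ultimately show False using ac by simp
qed

lemma L_smooth_imp_continuous_on:
  assumes "L_smooth L f"
  shows "continuous_on C f"
proof -
  from assms obtain g where "\<And>x. (f has_derivative (\<lambda>h. g x \<bullet> h)) (at x)"
    unfolding L_smooth_def by blast
  then show ?thesis
    by (intro continuous_at_imp_continuous_on ballI has_derivative_continuous)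
qed

lemma argminC_minimizes:
  fixes f :: "'a::real_inner \<Rightarrow> real"
  assumes sc: "strongly_convex u f" and "continuous_on C f"
    and "C \<noteq> {}" "compact C" "convex C"
  shows "argminC f C l \<in> C \<and> (\<forall>p\<in>C. l \<bullet> argminC f C l + f (argminC f C l) \<le> l \<bullet> p + f p)"
proof -
  have "continuous_on C (\<lambda>x. l \<bullet> x + f x)"
    using assms(2) by (intro continuous_intros)
  then obtain th where th: "th \<in> C" "\<forall>p\<in>C. l \<bullet> th + f th \<le> l \<bullet> p + f p"
    using continuous_attains_inf[OF \<open>compact C\<close> \<open>C \<noteq> {}\<close>] by blast
  have "x = th" if x: "x \<in> C \<and> (\<forall>p\<in>C. l \<bullet> x + f x \<le> l \<bullet> p + f p)" for x
  proof -
    have "(u/2) * (norm (x - th))^2 \<le> (l \<bullet> x + f x) - (l \<bullet> th + f th)"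
      using strongly_convex_quadratic_growth[OF sc \<open>convex C\<close> th] x by blast
    also have "\<dots> \<le> 0" using x th(1) by simp
    finally show ?thesis using sc by (simp add: strongly_convex_def mult_le_0_iff)
  qed
  then have "argminC f C l = th"
    unfolding argminC_def using th by (intro the_equality) blast+
  with th show ?thesis by simp
qed

lemma argminC_lipschitz:
  fixes f :: "'a::real_inner \<Rightarrow> real"
  assumes sc: "strongly_convex u f" and "continuous_on C f"
    and "C \<noteq> {}" "compact C" and cvx: "convex C"
  shows "u * norm (argminC f C l1 - argminC f C l2) \<le> norm (l1 - l2)"
proof -
  define a where "a = argminC f C l1"
  define b where "b = argminC f C l2"
  have A: "a \<in> C" "\<forall>p\<in>C. l1 \<bullet> a + f a \<le> l1 \<bullet> p + f p"
    using argminC_minimizes[OF assms, of l1] by (auto simp: a_def)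
  have B: "b \<in> C" "\<forall>p\<in>C. l2 \<bullet> b + f b \<le> l2 \<bullet> p + f p"
    using argminC_minimizes[OF assms, of l2] by (auto simp: b_def)
  have "(u/2) * (norm (a - b))^2 \<le> (l1 \<bullet> b + f b) - (l1 \<bullet> a + f a)"
    using strongly_convex_quadratic_growth[OF sc cvx A B(1)] by (simp add: norm_minus_commute)
  moreover have "(u/2) * (norm (a - b))^2 \<le> (l2 \<bullet> a + f a) - (l2 \<bullet> b + f b)"
    using strongly_convex_quadratic_growth[OF sc cvx B A(1)] .
  ultimately have "u * (norm (a - b))^2 \<le> (l1 - l2) \<bullet> (b - a)"
    by (simp add: inner_diff_left inner_diff_right algebra_simps)
  also have "\<dots> \<le> norm (l1 - l2) * norm (a - b)"
    using Cauchy_Schwarz_ineq2[of "l1 - l2" "b - a"] by (simp add: norm_minus_commute)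
  finally have "u * norm (a - b) * norm (a - b) \<le> norm (l1 - l2) * norm (a - b)"
    by (simp add: power2_eq_square mult.assoc)
  hence "u * norm (a - b) \<le> norm (l1 - l2)"
    by (cases "norm (a - b) = 0") (simp_all add: mult_le_cancel_right)
  thus ?thesis unfolding a_def b_def .
qed

lemma norm_add_squared_le:
  fixes a b :: "'a::real_inner"
  assumes "0 < t"
  shows "(norm (a + b))^2 \<le> (1 + t) * (norm a)^2 + (1 + 1/t) * (norm b)^2"
proof -
  have "0 \<le> (t * norm a - norm b)^2 / t" using assms by simp
  also have "\<dots> = t * (norm a)^2 + (1/t) * (norm b)^2 - 2 * (norm a * norm b)"
    using assms by (simp add: field_simps power2_eq_square)
  finally have "2 * (a \<bullet> b) \<le> t * (norm a)^2 + (1/t) * (norm b)^2"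
    using Cauchy_Schwarz_ineq2[of a b] by simp
  moreover have "(norm (a + b))^2 = (norm a)^2 + 2 * (a \<bullet> b) + (norm b)^2"
    by (simp add: power2_norm_eq_inner inner_add_left inner_add_right inner_commute)
  ultimately show ?thesis by (simp add: algebra_simps)
qed

definition avg :: "('j::finite \<Rightarrow> 'a::real_vector) \<Rightarrow> 'a" where
  "avg v = (1 / real CARD('j)) *\<^sub>R (\<Sum>j\<in>UNIV. v j)"

lemma avg_diff: "avg (\<lambda>j. a j - b j) = avg a - avg b"
  by (simp add: avg_def sum_subtractf scaleR_diff_right)

lemma avg_add: "avg (\<lambda>j. a j + b j) = avg a + avg b"
  by (simp add: avg_def sum.distrib scaleR_add_right)

lemma avg_scaleR: "avg (\<lambda>j. c *\<^sub>R a j) = c *\<^sub>R avg a"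
  by (simp add: avg_def scaleR_sum_right[symmetric])

lemma avg_const [simp]: "avg (\<lambda>j::'j::finite. c) = c"
  by (simp add: avg_def sum_constant_scaleR)

lemma consensus_err_avg: "consensus_err v = (\<Sum>i\<in>UNIV. (norm (v i - avg v))^2)"
  by (simp add: consensus_err_def avg_def)

lemma consensus_err_le_sum_norm:
  fixes v :: "'j::finite \<Rightarrow> 'a::real_inner"
  shows "consensus_err v \<le> (\<Sum>i\<in>UNIV. (norm (v i))^2)"
proof -
  define m where "m = avg v"
  have sum_v: "(\<Sum>i\<in>UNIV. v i) = real CARD('j) *\<^sub>R m" by (simp add: m_def avg_def)
  have "consensus_err v = (\<Sum>i\<in>UNIV. (norm (v i))^2 - 2 * (v i \<bullet> m) + (norm m)^2)"
    unfolding consensus_err_avg m_def[symmetric]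
    by (rule sum.cong) (simp_all add: power2_norm_eq_inner inner_diff_left inner_diff_right inner_commute)
  also have "\<dots> = (\<Sum>i\<in>UNIV. (norm (v i))^2) - 2 * ((\<Sum>i\<in>UNIV. v i) \<bullet> m) + real CARD('j) * (norm m)^2"
    by (simp add: sum.distrib sum_subtractf sum_distrib_left inner_sum_left)
  also have "\<dots> = (\<Sum>i\<in>UNIV. (norm (v i))^2) - real CARD('j) * (norm m)^2"
    unfolding sum_v by (simp add: power2_norm_eq_inner)
  finally show ?thesis by simp
qed

lemma norm_vec_squared: "(norm (x :: real^'n))^2 = (\<Sum>i\<in>UNIV. (x$i)^2)"
  unfolding power2_norm_eq_inner inner_vec_def by (simp add: power2_eq_square)

lemma norm_euclidean_squared: "(norm (x :: 'a::euclidean_space))^2 = (\<Sum>b\<in>Basis. (x \<bullet> b)^2)"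
  unfolding power2_norm_eq_inner by (subst euclidean_inner) (simp add: power2_eq_square)

text \<open>The rows of \<open>Z\<close> are mixed coordinatewise, so the operator norm of \<open>E - 1 1\<^sup>T/J\<close> acting on
  each of the \<open>DIM('a)\<close> columns bounds the Frobenius norm.\<close>
lemma sum_norm_centered_mixing_le:
  fixes E :: "real^'j^'j" and Z :: "'j::finite \<Rightarrow> 'a::euclidean_space"
  shows "(\<Sum>i\<in>UNIV. (norm (\<Sum>j\<in>UNIV. (E$i$j - 1 / real CARD('j)) *\<^sub>R Z j))^2)
     \<le> kappa E * (\<Sum>i\<in>UNIV. (norm (Z i))^2)"
proof -
  define F where "F = (\<lambda>x. (E - (\<chi> i j. 1 / real CARD('j))) *v x)"
  define z where "z b = (\<chi> j. Z j \<bullet> b)" for b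
  have col: "(\<Sum>j\<in>UNIV. (E$i$j - 1 / real CARD('j)) *\<^sub>R Z j) \<bullet> b = F (z b) $ i" for i b
    by (simp add: F_def matrix_vector_mult_def z_def inner_sum_left)
  have "(\<Sum>i\<in>UNIV. (norm (\<Sum>j\<in>UNIV. (E$i$j - 1 / real CARD('j)) *\<^sub>R Z j))^2)
      = (\<Sum>b\<in>Basis. \<Sum>i\<in>UNIV. (F (z b) $ i)^2)"
    by (subst norm_euclidean_squared) (simp add: col sum.swap[of _ UNIV])
  also have "\<dots> = (\<Sum>b\<in>Basis. (norm (F (z b)))^2)"
    by (simp add: norm_vec_squared)
  also have "\<dots> \<le> (\<Sum>b\<in>Basis. kappa E * (norm (z b))^2)"
  proof (rule sum_mono)
    fix b :: 'a
    have "norm (F (z b)) \<le> onorm F * norm (z b)"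
      by (rule onorm) (simp add: F_def)
    then have "(norm (F (z b)))^2 \<le> (onorm F * norm (z b))^2"
      by (simp add: power_mono)
    then show "(norm (F (z b)))^2 \<le> kappa E * (norm (z b))^2"
      by (simp add: kappa_def F_def power_mult_distrib)
  qed
  also have "\<dots> = kappa E * (\<Sum>i\<in>UNIV. (norm (Z i))^2)"
    by (simp add: sum_distrib_left[symmetric] norm_vec_squared z_def norm_euclidean_squared sum.swap[of _ Basis])
  finally show ?thesis .
qed

lemma consensus_err_mixing_le:
  fixes E :: "real^'j^'j" and Y :: "'j::finite \<Rightarrow> 'a::euclidean_space"
  assumes ds: "doubly_stochastic E"
  shows "consensus_err (\<lambda>i. \<Sum>j\<in>UNIV. E$i$j *\<^sub>R Y j) \<le> kappa E * consensus_err Y"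
proof -
  define J where "J = real CARD('j)"
  define W where "W i = (\<Sum>j\<in>UNIV. E$i$j *\<^sub>R Y j)" for i
  have row: "(\<Sum>j\<in>UNIV. E$i$j) = 1" and col: "(\<Sum>i\<in>UNIV. E$i$j) = 1" for i j
    using ds by (simp_all add: doubly_stochastic_def)
  have "(\<Sum>i\<in>UNIV. W i) = (\<Sum>j\<in>UNIV. (\<Sum>i\<in>UNIV. E$i$j) *\<^sub>R Y j)"
    unfolding W_def by (subst sum.swap) (simp add: scaleR_sum_left)
  hence avg_W: "avg W = avg Y" by (simp add: col avg_def)
  have centered: "W i - avg Y = (\<Sum>j\<in>UNIV. (E$i$j - 1 / J) *\<^sub>R (Y j - avg Y))" for i
  proof -
    have "(\<Sum>j\<in>UNIV. (E$i$j - 1 / J) *\<^sub>R (Y j - avg Y))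
        = W i - (\<Sum>j\<in>UNIV. E$i$j) *\<^sub>R avg Y - (1/J) *\<^sub>R (\<Sum>j\<in>UNIV. Y j)
          + (\<Sum>j\<in>(UNIV::'j set). 1 / J) *\<^sub>R avg Y"
      by (simp add: algebra_simps W_def sum.distrib sum_subtractf scaleR_sum_left[symmetric]
          scaleR_sum_right[symmetric])
    also have "\<dots> = W i - avg Y" by (simp add: row avg_def J_def)
    finally show ?thesis by simp
  qed
  have "consensus_err W = (\<Sum>i\<in>UNIV. (norm (\<Sum>j\<in>UNIV. (E$i$j - 1 / real CARD('j)) *\<^sub>R (Y j - avg Y)))^2)"
    unfolding consensus_err_avg avg_W centered J_def ..
  also have "\<dots> \<le> kappa E * consensus_err Y"
    unfolding consensus_err_avg by (rule sum_norm_centered_mixing_le)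
  finally show ?thesis by (simp add: W_def[abs_def])
qed

lemma consensus_err_lipschitz_le:
  fixes G :: "'j::finite \<Rightarrow> 'a::real_inner \<Rightarrow> 'a"
  assumes lip: "\<And>j x y. norm (G j x - G j y) \<le> c * norm (x - y)" and "0 \<le> c"
  shows "consensus_err (\<lambda>j. G j (Lam j) - G j (avg Lam)) \<le> c^2 * consensus_err Lam"
proof -
  have "(norm (G j (Lam j) - G j (avg Lam)))^2 \<le> c^2 * (norm (Lam j - avg Lam))^2" for j
    using power_mono[OF lip[of j "Lam j" "avg Lam"]] by (simp add: power_mult_distrib)
  then have "(\<Sum>j\<in>UNIV. (norm (G j (Lam j) - G j (avg Lam)))^2) \<le> c^2 * consensus_err Lam"
    unfolding consensus_err_avg sum_distrib_left by (rule sum_mono)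
  then show ?thesis by (rule order_trans[OF consensus_err_le_sum_norm])
qed

text \<open>Split the centred step as \<open>(A - t D) - t H\<close>: \<open>A\<close> is the consensus deviation of \<open>Lam\<close>,
  \<open>D\<close> the centred change of \<open>G\<close> caused by it (controlled by Lipschitz continuity), and \<open>H\<close> the
  centred values of \<open>G\<close> at the common point \<open>avg Lam\<close> (controlled by the heterogeneity bound).\<close>
lemma consensus_err_gradient_step_le:
  fixes G :: "'j::finite \<Rightarrow> 'a::real_inner \<Rightarrow> 'a" and Lam :: "'j \<Rightarrow> 'a"
  assumes lip: "\<And>j x y. norm (G j x - G j y) \<le> c * norm (x - y)"
    and het: "\<And>j x. (norm (G j x - avg (\<lambda>i. G i x)))^2 \<le> d"
    and eta: "0 < \<bar>t\<bar> * c" and ep: "0 < ep"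
  shows "consensus_err (\<lambda>j. Lam j - t *\<^sub>R G j (Lam j))
    \<le> (1 + ep) * (1 + \<bar>t\<bar> * c)^2 * consensus_err Lam + (1 + 1/ep) * t^2 * (real CARD('j) * d)"
proof -
  define et where "et = \<bar>t\<bar> * c"
  have "0 < c" using eta by (simp add: zero_less_mult_iff)
  define A where "A j = Lam j - avg Lam" for j
  define P where "P j = G j (Lam j) - G j (avg Lam)" for j
  define D where "D j = P j - avg P" for j
  define H where "H j = G j (avg Lam) - avg (\<lambda>i. G i (avg Lam))" for j
  define Y where "Y j = Lam j - t *\<^sub>R G j (Lam j)" for j
  have "avg Y = avg Lam - t *\<^sub>R (avg P + avg (\<lambda>j. G j (avg Lam)))"
    unfolding Y_def P_def by (simp add: avg_diff avg_scaleR avg_add[symmetric])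
  then have split: "Y j - avg Y = (A j - t *\<^sub>R D j) + (- (t *\<^sub>R H j))" for j
    unfolding Y_def A_def D_def H_def P_def by (simp add: algebra_simps)
  have D_sum: "(\<Sum>j\<in>UNIV. (norm (D j))^2) \<le> c^2 * consensus_err Lam"
    unfolding D_def P_def using consensus_err_lipschitz_le[OF lip] \<open>0 < c\<close>
    by (simp add: consensus_err_avg)
  have H_sum: "(\<Sum>j\<in>UNIV. (norm (H j))^2) \<le> real CARD('j) * d"
    using sum_mono[of UNIV "\<lambda>j. (norm (H j))^2" "\<lambda>_. d"] het by (simp add: H_def)
  have "(norm (Y j - avg Y))^2 \<le> (1 + ep) * ((1 + et) * (norm (A j))^2
      + (1 + 1/et) * t^2 * (norm (D j))^2) + (1 + 1/ep) * t^2 * (norm (H j))^2" for j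
  proof -
    have "(norm (Y j - avg Y))^2
        \<le> (1 + ep) * (norm (A j - t *\<^sub>R D j))^2 + (1 + 1/ep) * (norm (- (t *\<^sub>R H j)))^2"
      unfolding split by (rule norm_add_squared_le[OF ep])
    also have "(norm (A j - t *\<^sub>R D j))^2 \<le> (1 + et) * (norm (A j))^2 + (1 + 1/et) * (norm (- (t *\<^sub>R D j)))^2"
      using norm_add_squared_le[of et "A j" "- (t *\<^sub>R D j)"] eta by (simp add: et_def)
    finally show ?thesis using ep by (simp add: power_mult_distrib mult_left_mono mult.assoc)
  qed
  then have "consensus_err Y \<le> (\<Sum>j\<in>UNIV. (1 + ep) * ((1 + et) * (norm (A j))^2
      + (1 + 1/et) * t^2 * (norm (D j))^2) + (1 + 1/ep) * t^2 * (norm (H j))^2)"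
    unfolding consensus_err_avg[of Y] by (rule sum_mono)
  also have "\<dots> = (1 + ep) * ((1 + et) * consensus_err Lam + (1 + 1/et) * t^2 * (\<Sum>j\<in>UNIV. (norm (D j))^2))
      + (1 + 1/ep) * t^2 * (\<Sum>j\<in>UNIV. (norm (H j))^2)"
    by (simp add: sum.distrib sum_distrib_left consensus_err_avg A_def distrib_left)
  also have "\<dots> \<le> (1 + ep) * ((1 + et) * consensus_err Lam + (1 + 1/et) * t^2 * (c^2 * consensus_err Lam))
      + (1 + 1/ep) * t^2 * (real CARD('j) * d)"
    using D_sum H_sum ep eta by (intro add_mono mult_left_mono) (auto simp: et_def)
  also have "\<dots> = (1 + ep) * (1 + et)^2 * consensus_err Lam + (1 + 1/ep) * t^2 * (real CARD('j) * d)"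
  proof -
    have "t^2 * c^2 = et^2" by (simp add: et_def power_mult_distrib)
    then have "(1 + 1/et) * t^2 * c^2 = et + et^2"
      using eta by (simp add: et_def[symmetric] field_simps power2_eq_square)
    then have D_term: "(1 + 1/et) * t^2 * (c^2 * consensus_err Lam) = (et + et^2) * consensus_err Lam"
      by (simp only: mult.assoc[symmetric])
    show ?thesis unfolding D_term by (simp add: power2_eq_square algebra_simps)
  qed
  finally show ?thesis by (simp add: Y_def[abs_def] et_def)
qed

lemma step_size_le_fifth:
  fixes s g u J :: real
  assumes "0 < s" "s \<le> 1" "0 < u" "0 < J"
    and bound: "6 * g^2 / (u^2 * J^2) \<le> (2 - s) * s^2 / (3 * (3 - s))"
  shows "\<bar>g\<bar> * (1 / (u * J)) \<le> s / 5"
proof -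
  define e where "e = \<bar>g\<bar> * (1 / (u * J))"
  have "(2 - s) * s^2 \<le> (2/3) * (3 - s) * s^2"
    by (rule mult_right_mono) (use assms in auto)
  hence "(2 - s) * s^2 / (3 * (3 - s)) \<le> 2 * s^2 / 9"
    using assms by (simp add: divide_le_eq algebra_simps)
  moreover have "6 * e^2 = 6 * g^2 / (u^2 * J^2)"
    by (simp add: e_def power_mult_distrib power_divide)
  moreover have "(s/5)^2 = s^2 / 25" by (simp add: power_divide)
  moreover have "0 \<le> s^2" by simp
  ultimately have "e^2 \<le> (s/5)^2" using bound by linarith
  then show ?thesis unfolding e_def by (rule power2_le_imp_le) (use assms in simp)
qed

lemma step_size_decay:
  fixes s g g' :: real
  assumes "0 < s" "s \<le> 1" "g' \<noteq> 0"
    and ratio: "g^2 / g'^2 \<le> 2 / (1 + (1 - s^2))"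
  shows "g^2 * (2 - s^2) \<le> 2 * g'^2"
proof -
  have "0 < 2 - s^2" using power_le_one[of s 2] assms by simp
  moreover have "g^2 \<le> 2 / (2 - s^2) * g'^2"
    using ratio \<open>g' \<noteq> 0\<close> by (simp add: divide_le_eq)
  ultimately show ?thesis by (simp add: le_divide_eq mult.commute)
qed

lemma consensus_contraction_poly_le:
  fixes s e :: real
  assumes s0: "0 < s" and s1: "s \<le> 1" and "0 \<le> e" and "e \<le> s / 5"
  shows "(1 - s) * ((1 + s/4) * (1 + e)^2 * 18 + s^3 + 4 * s^2) \<le> 9 * (2 - s^2)"
proof -
  define P where "P = s^3 + 4 * s^2"
  define Q where "Q = s * (63/5 - 191/25 * s + 267/25 * s^2 + 59/25 * s^3)"
  have "(1 + e)^2 \<le> (1 + s/5)^2" using assms by (intro power_mono) auto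
  hence "(1 - s) * ((1 + s/4) * (1 + e)^2 * 18) \<le> (1 - s) * ((1 + s/4) * (1 + s/5)^2 * 18)"
    using s0 s1 by (intro mult_left_mono) auto
  moreover have "0 \<le> Q"
    using s0 s1 unfolding Q_def by (intro mult_nonneg_nonneg) (auto intro!: add_nonneg_nonneg)
  moreover have "9 * (2 - s^2) - ((1 - s) * ((1 + s/4) * (1 + s/5)^2 * 18) + (1 - s) * P)
      = Q / 2"
    by (simp add: P_def Q_def field_simps power2_eq_square power3_eq_cube)
  moreover have "(1 - s) * ((1 + s/4) * (1 + e)^2 * 18 + P) = (1 - s) * ((1 + s/4) * (1 + e)^2 * 18) + (1 - s) * P"
    by (simp add: distrib_left)
  ultimately show ?thesis unfolding P_def[symmetric] add.assoc by linarith
qed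

lemma consensus_bound_induction_step:
  fixes s e e' eta G G' W :: real
  assumes s0: "0 < s" and s1: "s \<le> 1" and "0 \<le> eta" "eta \<le> s / 5"
    and W0: "0 \<le> W" and G0: "0 \<le> G" and IH: "e \<le> 18 * G * W / s^3"
    and decay: "G * (2 - s^2) \<le> 2 * G'"
    and recursion: "e' \<le> (1 - s) * ((1 + s/4) * (1 + eta)^2 * e + (1 + 1 / (s/4)) * G * W)"
  shows "e' \<le> 18 * G' * W / s^3"
proof -
  define X where "X = (1 + s/4) * (1 + eta)^2 * 18 + s^3 + 4 * s^2"
  have "(1 + s/4) * (1 + eta)^2 * e \<le> (1 + s/4) * (1 + eta)^2 * (18 * G * W / s^3)"
    using IH s0 by (intro mult_left_mono) auto
  then have "e' \<le> (1 - s) * ((1 + s/4) * (1 + eta)^2 * (18 * G * W / s^3) + (1 + 1 / (s/4)) * G * W)"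
    using recursion s1 by (smt (verit) mult_left_mono)
  also have "\<dots> = (1 - s) * X * (G * W) / s^3"
    using s0 by (simp add: X_def field_simps power3_eq_cube power2_eq_square)
  also have "\<dots> \<le> 9 * (2 - s^2) * (G * W) / s^3"
  proof -
    have "(1 - s) * X \<le> 9 * (2 - s^2)"
      using consensus_contraction_poly_le[OF s0 s1 assms(3,4)] by (simp only: X_def)
    thus ?thesis using G0 W0 s0 by (intro divide_right_mono mult_right_mono) auto
  qed
  also have "\<dots> \<le> 18 * G' * W / s^3"
    using mult_right_mono[OF decay W0] s0 by (intro divide_right_mono) (auto simp: algebra_simps)
  finally show ?thesis .
qed

lemma consensus_err_bound:
  fixes E :: "real^'j^'j" and G :: "'j::finite \<Rightarrow> 'a::euclidean_space \<Rightarrow> 'a"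
    and lam :: "nat \<Rightarrow> 'j \<Rightarrow> 'a" and gamma :: "nat \<Rightarrow> real"
  defines "\<sigma> \<equiv> 1 - kappa E"
  assumes ds: "doubly_stochastic E" and "kappa E < 1"
    and lip: "\<And>j x y. norm (G j x - G j y) \<le> c * norm (x - y)" and "0 < c"
    and het: "\<And>j x. (norm (G j x - avg (\<lambda>i. G i x)))^2 \<le> d"
    and init: "consensus_err (lam 0) = 0"
    and rec: "\<And>k. lam (Suc k) = (\<lambda>i. \<Sum>j\<in>UNIV. E$i$j *\<^sub>R (lam k j - gamma k *\<^sub>R G j (lam k j)))"
    and gamma_nz: "\<And>k. gamma k \<noteq> 0"
    and small: "\<And>k. \<bar>gamma k\<bar> * c \<le> \<sigma> / 5"
    and decay: "\<And>k. (gamma k)^2 * (2 - \<sigma>^2) \<le> 2 * (gamma (Suc k))^2"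
  shows "consensus_err (lam k) \<le> 18 * (gamma k)^2 * (real CARD('j) * d) / \<sigma>^3"
proof -
  have "0 \<le> kappa E" by (simp add: kappa_def)
  then have \<sigma>0: "0 < \<sigma>" and \<sigma>1: "\<sigma> \<le> 1" using \<open>kappa E < 1\<close> by (auto simp: \<sigma>_def)
  have d0: "0 \<le> d" using het order_trans zero_le_power2 by metis
  have one_step: "consensus_err (lam (Suc n)) \<le> (1 - \<sigma>) * ((1 + \<sigma>/4) * (1 + \<bar>gamma n\<bar> * c)^2
      * consensus_err (lam n) + (1 + 1 / (\<sigma>/4)) * (gamma n)^2 * (real CARD('j) * d))" for n
  proof -
    have "consensus_err (lam (Suc n))
        \<le> kappa E * consensus_err (\<lambda>j. lam n j - gamma n *\<^sub>R G j (lam n j))"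
      unfolding rec by (rule consensus_err_mixing_le[OF ds])
    also have "\<dots> \<le> kappa E * ((1 + \<sigma>/4) * (1 + \<bar>gamma n\<bar> * c)^2 * consensus_err (lam n)
        + (1 + 1 / (\<sigma>/4)) * (gamma n)^2 * (real CARD('j) * d))"
      using consensus_err_gradient_step_le[OF lip het, of "gamma n" "\<sigma>/4"] \<open>0 \<le> kappa E\<close>
        gamma_nz \<open>0 < c\<close> \<sigma>0
      by (intro mult_left_mono) auto
    finally show ?thesis by (simp add: \<sigma>_def)
  qed
  show ?thesis
  proof (induction k)
    case 0
    show ?case using init d0 \<sigma>0 by simp
  next
    case (Suc n)
    show ?case
      by (rule consensus_bound_induction_step[OF \<sigma>0 \<sigma>1 _ small _ _ Suc.IH decay one_step])
        (use d0 \<open>0 < c\<close> in auto)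
  qed
qed

lemma sum_neighbors_eq_sum_UNIV:
  fixes E :: "real^'j::finite^'j" and v :: "'j \<Rightarrow> 'a::real_vector"
  assumes "doubly_stochastic E" "\<And>j. 0 < E$i$j \<longleftrightarrow> (j \<in> N i \<or> i = j)"
  shows "(\<Sum>j\<in>insert i (N i). E$i$j *\<^sub>R v j) = (\<Sum>j\<in>UNIV. E$i$j *\<^sub>R v j)"
proof -
  have zero: "E$i$j = 0" if "j \<notin> insert i (N i)" for j
    using assms that by (auto simp: doubly_stochastic_def order_le_less)
  show ?thesis by (rule sum.mono_neutral_left) (simp_all add: zero)
qed

lemma grad_g_lipschitz:
  fixes f :: "'j::finite \<Rightarrow> 'a::real_inner \<Rightarrow> real"
  assumes "strongly_convex u (f j)" "continuous_on (C j) (f j)"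
    and "C j \<noteq> {}" "compact (C j)" "convex (C j)"
  shows "norm (grad_g f C s j x - grad_g f C s j y) \<le> 1 / (u * real CARD('j)) * norm (x - y)"
proof -
  have "0 < u" using assms(1) by (simp add: strongly_convex_def)
  have "norm (grad_g f C s j x - grad_g f C s j y)
      = norm (argminC (f j) (C j) x - argminC (f j) (C j) y) / real CARD('j)"
    by (simp add: grad_g_def scaleR_diff_right[symmetric] norm_minus_commute)
  also have "\<dots> \<le> norm (x - y) / u / real CARD('j)"
    using argminC_lipschitz[OF assms, of x y] \<open>0 < u\<close>
    by (intro divide_right_mono) (auto simp: field_simps)
  finally show ?thesis by (simp add: field_simps)
qed

lemma grad_g_heterogeneity_le_delta2:
  fixes f :: "'j::finite \<Rightarrow> 'a::real_inner \<Rightarrow> real"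
  assumes "bdd_above (range (\<lambda>lam. Max (range (\<lambda>i. (norm (grad_g f C s i lam
        - (1 / real CARD('j)) *\<^sub>R (\<Sum>j\<in>UNIV. grad_g f C s j lam)))^2))))"
  shows "(norm (grad_g f C s j lam - avg (\<lambda>i. grad_g f C s i lam)))^2 \<le> delta2 f C s"
proof -
  have "(norm (grad_g f C s j lam - avg (\<lambda>i. grad_g f C s i lam)))^2
      \<le> Max (range (\<lambda>i. (norm (grad_g f C s i lam - (1 / real CARD('j)) *\<^sub>R (\<Sum>j\<in>UNIV. grad_g f C s j lam)))^2))"
    by (rule Max_ge) (auto simp: avg_def)
  also have "\<dots> \<le> delta2 f C s" unfolding delta2_def
    by (rule cSUP_upper[OF UNIV_I assms])
  finally show ?thesis .
qed

theorem lemma8: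
  fixes f :: "'j::finite \<Rightarrow> 'a::euclidean_space \<Rightarrow> real"
    and C :: "'j \<Rightarrow> 'a set" and s :: 'a and u L :: real
    and N :: "'j \<Rightarrow> 'j set" and E :: "real^'j^'j"
    and gamma :: "nat \<Rightarrow> real" and lam0 :: 'a
    and lam theta :: "nat \<Rightarrow> 'j \<Rightarrow> 'a"
  assumes f_sc: "\<And>i. strongly_convex u (f i)"
    and f_sm: "\<And>i. L_smooth L (f i)"
    and C_ne: "\<And>i. C i \<noteq> {}" and C_cpt: "\<And>i. compact (C i)" and C_cvx: "\<And>i. convex (C i)"
    and delta_fin: "bdd_above (range (\<lambda>lam. Max (range (\<lambda>i. (norm (grad_g f C s i lam
        - (1 / real CARD('j)) *\<^sub>R (\<Sum>j\<in>UNIV. grad_g f C s j lam)))^2))))"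
    and graph: "undirected_connected N"
    and E_ds: "doubly_stochastic E"
    and E_supp: "\<And>i j. 0 < E$i$j \<longleftrightarrow> (j \<in> N i \<or> i = j)"
    and kappa_lt: "kappa E < 1"
    and init: "\<And>i. lam 0 i = lam0"
    and theta_def: "\<And>k i. theta k i = argminC (f i) (C i) (lam k i)"
    and lam_step: "\<And>k i. lam (Suc k) i = (\<Sum>j\<in>insert i (N i). E$i$j *\<^sub>R
          (lam k j - gamma k *\<^sub>R ((1 / real CARD('j)) *\<^sub>R s - (1 / real CARD('j)) *\<^sub>R theta k j)))"
    and step1: "\<And>k. 6 * (gamma k)^2 / (u^2 * (real CARD('j))^2)
          \<le> (2 - (1 - kappa E)) * (1 - kappa E)^2 / (3 * (3 - (1 - kappa E)))"
    and step2: "\<And>k. 1 \<le> (gamma k)^2 / (gamma (Suc k))^2"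
    and step3: "\<And>k. (gamma k)^2 / (gamma (Suc k))^2 \<le> 2 / (1 + (1 - (1 - kappa E)^2))"
  shows "consensus_err (lam (Suc k)) \<le>
      18 * (gamma (Suc k))^2 * delta2 f C s * real CARD('j) / (1 - kappa E)^3"
proof -
  define J where "J = real CARD('j)"
  define \<sigma> where "\<sigma> = 1 - kappa E"
  have "0 \<le> kappa E" by (simp add: kappa_def)
  then have \<sigma>0: "0 < \<sigma>" and \<sigma>1: "\<sigma> \<le> 1" using kappa_lt by (auto simp: \<sigma>_def)
  have "0 < u" using f_sc by (simp add: strongly_convex_def)
  have gamma_nz: "gamma k \<noteq> 0" for k
    using step2[of k] by (cases "gamma k = 0") auto
  have rec: "lam (Suc k) = (\<lambda>i. \<Sum>j\<in>UNIV. E$i$j *\<^sub>R (lam k j - gamma k *\<^sub>R grad_g f C s j (lam k j)))" for k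
  proof
    fix i
    show "lam (Suc k) i = (\<Sum>j\<in>UNIV. E$i$j *\<^sub>R (lam k j - gamma k *\<^sub>R grad_g f C s j (lam k j)))"
      unfolding lam_step theta_def grad_g_def by (rule sum_neighbors_eq_sum_UNIV[where N = N, OF E_ds E_supp])
  qed
  have lip: "norm (grad_g f C s j x - grad_g f C s j y) \<le> 1 / (u * J) * norm (x - y)" for j x y
    unfolding J_def
    by (rule grad_g_lipschitz[OF f_sc L_smooth_imp_continuous_on[OF f_sm] C_ne C_cpt C_cvx])
  have small: "\<bar>gamma k\<bar> * (1 / (u * J)) \<le> \<sigma> / 5" for k
    using step_size_le_fifth[OF \<sigma>0 \<sigma>1 \<open>0 < u\<close>] step1[of k] by (simp add: J_def \<sigma>_def)
  have decay: "(gamma k)^2 * (2 - \<sigma>^2) \<le> 2 * (gamma (Suc k))^2" for k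
    using step_size_decay[OF \<sigma>0 \<sigma>1 gamma_nz step3[of k, folded \<sigma>_def]] .
  have "consensus_err (lam 0) = 0" by (simp add: consensus_err_avg init[abs_def])
  from consensus_err_bound[OF E_ds kappa_lt lip _ grad_g_heterogeneity_le_delta2[OF delta_fin]
      this rec gamma_nz small[unfolded \<sigma>_def] decay[unfolded \<sigma>_def]] \<open>0 < u\<close>
  show ?thesis by (simp add: J_def \<sigma>_def mult_ac)
qed

end
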